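(* Let $S$ be a finite set and let $\mathcal{I}\subseteq 2^S$ be a downset of the Boolean lattice $(2^S,\subseteq)$ (i.e., $Y\subseteq X\in\mathcal{I}$ implies $Y\in\mathcal{I}$). Suppose that there exists $Z\in\mathcal{I}$ with $\hat\mu_{\mathcal{I}}(Z)=0$, and fix such a $Z$. Then $$\mathcal{I}\in \bullet\big(\{\,2^X \mid X\in \mathcal{I}\setminus\{Z\}\,\}\big),$$ where $2^X=\{Y\subseteq S\mid Y\subseteq X\}$ is the principal downset generated by $X$.
   Context: For a finite set $S$ and a configuration $\mathcal{C}\subseteq 2^S$, the generalized Möbius function $\hat\mu_{\mathcal{C}}:2^S\to\mathbb{Z}$ is defined by top-down induction: $\hat\mu_{\mathcal{C}}(X)=[X\in\mathcal{C}]-\sum_{X\subsetneq X'\subseteq S}\hat\mu_{\mathcal{C}}(X')$, where $[X\in\mathcal{C}]$ is $1$ if $X\in\mathcal{C}$ and $0$ otherwise. For sets $A,B$, the disjoint union $A\,\dot\cup\, B$ is $A\cup B$ and is defined only when $A\cap B=\emptyset$; the subset complement $A\,\dot\setminus\, B$ is $A\setminus B$ and is defined only when $B\subseteq A$. For a finite family $\mathcal{F}$ of sets, the partial dot-algebra $\bullet(\mathcal{F})$ is the smallest family of sets that contains $\emptyset$ and every member of $\mathcal{F}$ and is closed under all well-defined disjoint unions and subset complements of its members. Here the members of $\mathcal{F}$ are themselves sets of subsets of $S$, so $\bullet(\mathcal{F})$ consists of subsets of $2^S$. *)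

theory Defs
  imports Main
begin

text \<open>Values outside Pow S are set to 0.\<close>

function gen_mobius :: "'a set \<Rightarrow> 'a set set \<Rightarrow> 'a set \<Rightarrow> int" where
  "gen_mobius S C X =
     (if finite S \<and> X \<subseteq> S then
        (if X \<in> C then 1 else 0)
        - (\<Sum>X' \<in> {X'. X \<subset> X' \<and> X' \<subseteq> S}. gen_mobius S C X')
      else 0)"
  by auto
termination
proof (relation "measure (\<lambda>(S, C, X). card (S - X))")
  show "wf (measure (\<lambda>(S, C, X). card (S - X)))" by simp
next
  fix S :: "'a set" and C X X'
  assume a: "finite S \<and> X \<subseteq> S" and b: "X' \<in> {X'. X \<subset> X' \<and> X' \<subseteq> S}"
  then have "S - X' \<subset> S - X" by blast
  then show "((S, C, X'), (S, C, X)) \<in> measure (\<lambda>(S, C, X). card (S - X))"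
    using a by (simp add: psubset_card_mono)
qed

declare gen_mobius.simps [simp del]

inductive_set dot_algebra :: "'b set set \<Rightarrow> 'b set set" for F :: "'b set set" where
  empty: "{} \<in> dot_algebra F"
| gen: "A \<in> F \<Longrightarrow> A \<in> dot_algebra F"
| disj_union: "A \<in> dot_algebra F \<Longrightarrow> B \<in> dot_algebra F \<Longrightarrow> A \<inter> B = {} \<Longrightarrow> A \<union> B \<in> dot_algebra F"
| subset_diff: "A \<in> dot_algebra F \<Longrightarrow> B \<in> dot_algebra F \<Longrightarrow> B \<subseteq> A \<Longrightarrow> A - B \<in> dot_algebra F"

end

theory Submission
  imports Defs "HOL-Library.Disjoint_Sets"
begin

(* For X in I with Z not contained in X, the singleton {X} is 2^X minus the singletons strictly
   below X, which are available by induction. Removing from 2^X everything not above Z leaves the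
   interval [Z, X], and [A, X] = [A - v, X] - [A - v, X - v] then gives every interval [A, X] with
   Z \<subseteq> A \<subset> X \<in> I, in particular every covering pair {X - v, X} above Z. Since
   ({a, b} \<union> {c, d}) - {b, c} = {a, d}, these pairs chain together to every pair {X, Y} of members
   of I above Z with |X| + |Y| odd. Finally mu(Z) is the sum of (-1)^(|X| + |Z|) over the members X
   of I above Z, so mu(Z) = 0 says that these members split evenly by parity and can be matched
   into such pairs. *)

lemma sum_neg_one_power_strict_supersets:
  assumes "finite B" "A \<subset> B"
  shows "(\<Sum>T | A \<subset> T \<and> T \<subseteq> B. (-1::int) ^ card T) = - ((-1) ^ card A)"
proof -
  have fin: "finite {T. T \<subseteq> B \<and> A \<subseteq> T}"
    by (rule finite_subset[of _ "Pow B"]) (use assms(1) in auto)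
  have "(\<Sum>T | T \<subseteq> B \<and> A \<subseteq> T. (-1::int) ^ card T) = 0"
    by (rule sum_alternating_cancels[OF fin]) (use card_subsupersets_even_odd[OF assms] in simp)
  moreover have "{T. T \<subseteq> B \<and> A \<subseteq> T} = insert A {T. A \<subset> T \<and> T \<subseteq> B}"
    using assms(2) by auto
  ultimately show ?thesis
    using fin by (simp add: eq_neg_iff_add_eq_0)
qed

lemma gen_mobius_eq_alternating_sum:
  assumes "finite S" "X \<subseteq> S"
  shows "gen_mobius S C X = (\<Sum>Y | Y \<in> C \<and> X \<subseteq> Y \<and> Y \<subseteq> S. (-1) ^ (card Y + card X))"
  using assms
proof (induction S C X rule: gen_mobius.induct)
  case (1 S C X)
  define A where "A = {Y. X \<subset> Y \<and> Y \<subseteq> S}"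
  have finA: "finite A"
    unfolding A_def by (rule finite_subset[of _ "Pow S"]) (use \<open>finite S\<close> in auto)
  have IH: "gen_mobius S C Y = (\<Sum>W | W \<in> A \<inter> C \<and> Y \<subseteq> W. (-1) ^ (card W + card Y))"
    if "Y \<in> A" for Y
  proof -
    have "{W. W \<in> C \<and> Y \<subseteq> W \<and> W \<subseteq> S} = {W. W \<in> A \<inter> C \<and> Y \<subseteq> W}"
      using that unfolding A_def by auto
    then show ?thesis
      using 1 that unfolding A_def by auto
  qed
  have "(\<Sum>Y\<in>A. gen_mobius S C Y) = (\<Sum>Y\<in>A. \<Sum>W | W \<in> A \<inter> C \<and> Y \<subseteq> W. (-1) ^ (card W + card Y))"
    by (simp add: IH)
  also have "\<dots> = (\<Sum>W\<in>A \<inter> C. \<Sum>Y | Y \<in> A \<and> Y \<subseteq> W. (-1) ^ (card W + card Y))"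
    using finA by (intro sum.swap_restrict) auto
  also have "\<dots> = (\<Sum>W\<in>A \<inter> C. (-1) ^ card W * (\<Sum>Y | X \<subset> Y \<and> Y \<subseteq> W. (-1) ^ card Y))"
    unfolding power_add sum_distrib_left A_def
    by (intro sum.cong refl arg_cong2[where f = sum]) auto
  also have "\<dots> = - (\<Sum>W\<in>A \<inter> C. (-1) ^ (card W + card X))"
    unfolding power_add sum_negf[symmetric]
  proof (rule sum.cong)
    fix W assume "W \<in> A \<inter> C"
    then have "finite W" "X \<subset> W"
      using \<open>finite S\<close> by (auto simp: A_def finite_subset)
    from sum_neg_one_power_strict_supersets[OF this]
    show "(-1::int) ^ card W * (\<Sum>Y | X \<subset> Y \<and> Y \<subseteq> W. (-1) ^ card Y) = - ((-1) ^ card W * (-1) ^ card X)"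
      by simp
  qed simp
  finally have "gen_mobius S C X = (if X \<in> C then 1 else 0) + (\<Sum>W\<in>A \<inter> C. (-1) ^ (card W + card X))"
    using 1 by (subst gen_mobius.simps) (simp add: A_def)
  moreover have "{Y. Y \<in> C \<and> X \<subseteq> Y \<and> Y \<subseteq> S} = (if X \<in> C then insert X (A \<inter> C) else A \<inter> C)"
    using 1 by (auto simp: A_def)
  ultimately show ?case
    using finA by (simp add: A_def)
qed

lemma UN_in_dot_algebra:
  assumes "finite K" "disjoint_family_on A K" "\<And>k. k \<in> K \<Longrightarrow> A k \<in> dot_algebra F"
  shows "(\<Union>k\<in>K. A k) \<in> dot_algebra F"
  using assms
proof (induction K rule: finite_induct)
  case empty
  show ?case by (simp add: dot_algebra.empty)
next
  case (insert k K)
  have "A k \<inter> (\<Union>j\<in>K. A j) = {}"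
    using insert.hyps(2) insert.prems(1) by (fastforce simp: disjoint_family_on_def)
  then show ?case
    using insert by (auto intro: dot_algebra.disj_union disjoint_family_on_mono)
qed

lemma finite_in_dot_algebra:
  assumes "finite A" "\<And>x. x \<in> A \<Longrightarrow> {x} \<in> dot_algebra F"
  shows "A \<in> dot_algebra F"
  using UN_in_dot_algebra[of A "\<lambda>x. {x}"] assms by (simp add: disjoint_family_on_def)

lemma dot_algebra_pair_trans:
  assumes "{a, b} \<in> dot_algebra F" "{b, c} \<in> dot_algebra F" "{c, d} \<in> dot_algebra F"
    and "distinct [a, b, c, d]"
  shows "{a, d} \<in> dot_algebra F"
proof -
  have "{a, b} \<union> {c, d} \<in> dot_algebra F"
    using assms by (intro dot_algebra.disj_union) auto
  then have "({a, b} \<union> {c, d}) - {b, c} \<in> dot_algebra F"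
    using assms(2) by (rule dot_algebra.subset_diff) auto
  moreover have "({a, b} \<union> {c, d}) - {b, c} = {a, d}"
    using assms(4) by auto
  ultimately show ?thesis by simp
qed

lemma balanced_in_dot_algebra:
  assumes "finite A" "card {x\<in>A. P x} = card {x\<in>A. \<not> P x}"
    and "\<And>x y. x \<in> A \<Longrightarrow> y \<in> A \<Longrightarrow> P x \<Longrightarrow> \<not> P y \<Longrightarrow> {x, y} \<in> dot_algebra F"
  shows "A \<in> dot_algebra F"
proof -
  have "finite {x\<in>A. P x}" "finite {x\<in>A. \<not> P x}"
    using assms(1) by simp_all
  then obtain h where h: "bij_betw h {x\<in>A. P x} {x\<in>A. \<not> P x}"
    using assms(2) finite_same_card_bij by blast
  have "A = (\<Union>x\<in>{x\<in>A. P x}. {x, h x})"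
    using bij_betw_imp_surj_on[OF h] bij_betwE[OF h] by auto
  also have "\<dots> \<in> dot_algebra F"
  proof (rule UN_in_dot_algebra)
    show "finite {x\<in>A. P x}"
      using assms(1) by simp
    show "disjoint_family_on (\<lambda>x. {x, h x}) {x\<in>A. P x}"
      using bij_betw_imp_inj_on[OF h] bij_betwE[OF h] by (auto simp: disjoint_family_on_def inj_on_eq_iff)
    show "{x, h x} \<in> dot_algebra F" if "x \<in> {x\<in>A. P x}" for x
      using that bij_betwE[OF h] assms(3) by auto
  qed
  finally show ?thesis .
qed

locale principal_downsets_but_one =
  fixes I :: "'a set set" and Z :: "'a set" and F :: "'a set set set"
  assumes finite_member: "X \<in> I \<Longrightarrow> finite X"
    and downward_closed: "X \<in> I \<Longrightarrow> Y \<subseteq> X \<Longrightarrow> Y \<in> I"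
    and Pow_in_dot_algebra: "X \<in> I \<Longrightarrow> X \<noteq> Z \<Longrightarrow> Pow X \<in> dot_algebra F"
begin

lemma singleton_in_dot_algebra:
  assumes "X \<in> I" "\<not> Z \<subseteq> X"
  shows "{X} \<in> dot_algebra F"
  using finite_member[OF assms(1)] assms
proof (induction X rule: finite_psubset_induct)
  case (psubset X)
  have "Pow X - {X} \<in> dot_algebra F"
  proof (rule finite_in_dot_algebra)
    show "finite (Pow X - {X})"
      using psubset.hyps(1) by simp
    show "{W} \<in> dot_algebra F" if "W \<in> Pow X - {X}" for W
      using that psubset downward_closed by blast
  qed
  with psubset.prems have "Pow X - (Pow X - {X}) \<in> dot_algebra F"
    by (auto intro: dot_algebra.subset_diff Pow_in_dot_algebra)
  moreover have "Pow X - (Pow X - {X}) = {X}"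
    by auto
  ultimately show ?case
    by simp
qed

lemma interval_in_dot_algebra:
  assumes "finite D" "Z \<union> D \<subset> X" "X \<in> I"
  shows "{W. Z \<union> D \<subseteq> W \<and> W \<subseteq> X} \<in> dot_algebra F"
  using assms
proof (induction D arbitrary: X rule: finite_induct)
  case empty
  have "{W \<in> Pow X. \<not> Z \<subseteq> W} \<in> dot_algebra F"
  proof (rule finite_in_dot_algebra)
    show "finite {W \<in> Pow X. \<not> Z \<subseteq> W}"
      using finite_member[OF empty.prems(2)] by simp
    show "{W} \<in> dot_algebra F" if "W \<in> {W \<in> Pow X. \<not> Z \<subseteq> W}" for W
      using that empty.prems(2) downward_closed singleton_in_dot_algebra by blast
  qed
  with empty have "Pow X - {W \<in> Pow X. \<not> Z \<subseteq> W} \<in> dot_algebra F"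
    by (auto intro: dot_algebra.subset_diff Pow_in_dot_algebra)
  moreover have "Pow X - {W \<in> Pow X. \<not> Z \<subseteq> W} = {W. Z \<union> {} \<subseteq> W \<and> W \<subseteq> X}"
    by auto
  ultimately show ?case
    by simp
next
  case (insert v D)
  show ?case
  proof (cases "v \<in> Z")
    case True
    then show ?thesis
      using insert by (simp add: insert_absorb)
  next
    case False
    have "Z \<union> D \<subset> X - {v}"
      using insert.hyps(2) insert.prems(1) False by auto
    moreover have "X - {v} \<in> I"
      using insert.prems(2) downward_closed by blast
    ultimately have "{W. Z \<union> D \<subseteq> W \<and> W \<subseteq> X - {v}} \<in> dot_algebra F"
      by (rule insert.IH)
    moreover have "{W. Z \<union> D \<subseteq> W \<and> W \<subseteq> X} \<in> dot_algebra F"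
      using insert.prems by (intro insert.IH) auto
    ultimately have "{W. Z \<union> D \<subseteq> W \<and> W \<subseteq> X} - {W. Z \<union> D \<subseteq> W \<and> W \<subseteq> X - {v}} \<in> dot_algebra F"
      by (intro dot_algebra.subset_diff) auto
    moreover have "{W. Z \<union> D \<subseteq> W \<and> W \<subseteq> X} - {W. Z \<union> D \<subseteq> W \<and> W \<subseteq> X - {v}}
        = {W. Z \<union> insert v D \<subseteq> W \<and> W \<subseteq> X}"
      by auto
    ultimately show ?thesis
      by simp
  qed
qed

lemma edge_in_dot_algebra:
  assumes "X \<in> I" "v \<in> X" "Z \<subseteq> X - {v}"
  shows "{X - {v}, X} \<in> dot_algebra F"
proof -
  have "{W. Z \<union> (X - {v}) \<subseteq> W \<and> W \<subseteq> X} \<in> dot_algebra F"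
    using assms finite_member by (intro interval_in_dot_algebra) auto
  moreover have "{W. Z \<union> (X - {v}) \<subseteq> W \<and> W \<subseteq> X} = {X - {v}, X}"
    using assms(2,3) by (auto simp: subset_insert_iff)
  ultimately show ?thesis
    by simp
qed

lemma pair_below_in_dot_algebra:
  assumes "X \<in> I" "Z \<subseteq> Y" "Y \<subseteq> X" "odd (card X + card Y)"
  shows "{Y, X} \<in> dot_algebra F"
  using assms(1,3,4)
proof (induction "card X" arbitrary: X rule: less_induct)
  case less
  have "finite X"
    using less.prems(1) finite_member by blast
  have "X \<noteq> Y"
    using less.prems(3) by auto
  then obtain v where v: "v \<in> X" "v \<notin> Y"
    using less.prems(2) by auto
  define X1 where "X1 = X - {v}"
  have "X1 \<in> I" "Y \<subseteq> X1" "Suc (card X1) = card X"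
    using less.prems v downward_closed card_Suc_Diff1[OF \<open>finite X\<close> v(1)] by (auto simp: X1_def)
  have edge1: "{X1, X} \<in> dot_algebra F"
    unfolding X1_def using less.prems(1) v \<open>Y \<subseteq> X1\<close> assms(2) by (intro edge_in_dot_algebra) (auto simp: X1_def)
  show ?case
  proof (cases "X1 = Y")
    case True
    with edge1 show ?thesis by simp
  next
    case False
    then obtain w where w: "w \<in> X1" "w \<notin> Y"
      using \<open>Y \<subseteq> X1\<close> by auto
    define X2 where "X2 = X1 - {w}"
    have "X2 \<in> I" "Y \<subseteq> X2" "Suc (card X2) = card X1"
      using \<open>X1 \<in> I\<close> \<open>Y \<subseteq> X1\<close> w downward_closed \<open>finite X\<close> card_Suc_Diff1[of X1 w]
      by (auto simp: X1_def X2_def)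
    then have "odd (card X2 + card Y)"
      using less.prems(3) \<open>Suc (card X1) = card X\<close> by presburger
    then have "{Y, X2} \<in> dot_algebra F"
      using less.hyps \<open>X2 \<in> I\<close> \<open>Y \<subseteq> X2\<close> \<open>Suc (card X2) = card X1\<close> \<open>Suc (card X1) = card X\<close> by simp
    moreover have "{X2, X1} \<in> dot_algebra F"
      unfolding X2_def using \<open>X1 \<in> I\<close> w \<open>Y \<subseteq> X2\<close> assms(2) by (intro edge_in_dot_algebra) (auto simp: X2_def)
    moreover note edge1
    moreover have "distinct [Y, X2, X1, X]"
      using \<open>odd (card X2 + card Y)\<close> False v w by (auto simp: X1_def X2_def)
    ultimately show ?thesis
      by (rule dot_algebra_pair_trans)
  qed
qed

lemma opposite_parity_pair_in_dot_algebra: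
  assumes "X \<in> I" "Y \<in> I" "Z \<subseteq> X" "Z \<subseteq> Y" "odd (card X + card Y)"
  shows "{X, Y} \<in> dot_algebra F"
proof -
  have pair: "{X, Y} \<in> dot_algebra F"
    if XY: "X \<in> I" "Y \<in> I" "Z \<subseteq> X" "Z \<subseteq> Y" "odd (card X + card Z)" "even (card Y + card Z)" for X Y
  proof (cases "Y = Z")
    case True
    then show ?thesis
      using XY pair_below_in_dot_algebra[of X Z] by (simp add: insert_commute)
  next
    case False
    then obtain v where v: "v \<in> Y" "v \<notin> Z"
      using XY(4) by auto
    define Y1 where "Y1 = Y - {v}"
    have "Y1 \<in> I" "Z \<subseteq> Y1" "Suc (card Y1) = card Y"
      using XY v downward_closed finite_member card_Suc_Diff1[of Y v] by (auto simp: Y1_def)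
    then have "odd (card Y1 + card Z)"
      using XY(6) by presburger
    have edge: "{Y1, Y} \<in> dot_algebra F"
      unfolding Y1_def using XY v \<open>Z \<subseteq> Y1\<close> by (intro edge_in_dot_algebra) (auto simp: Y1_def)
    show ?thesis
    proof (cases "X = Y1")
      case True
      with edge show ?thesis by simp
    next
      case False
      have "{X, Z} \<in> dot_algebra F"
        using XY pair_below_in_dot_algebra[of X Z] by (simp add: insert_commute)
      moreover have "{Z, Y1} \<in> dot_algebra F"
        using \<open>Y1 \<in> I\<close> \<open>Z \<subseteq> Y1\<close> \<open>odd (card Y1 + card Z)\<close> pair_below_in_dot_algebra[of Y1 Z] by simp
      moreover note edge
      moreover have "distinct [X, Z, Y1, Y]"
        using XY \<open>odd (card Y1 + card Z)\<close> \<open>Y \<noteq> Z\<close> False v by (auto simp: Y1_def)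
      ultimately show ?thesis
        by (rule dot_algebra_pair_trans)
    qed
  qed
  from assms(5) consider "odd (card X + card Z)" "even (card Y + card Z)"
    | "odd (card Y + card Z)" "even (card X + card Z)"
    by (metis even_add)
  then show ?thesis
    using assms(1-4) pair[of X Y] pair[of Y X] by cases (simp_all add: insert_commute)
qed

lemma in_dot_algebra_if_parity_balanced:
  assumes "finite I"
    and "card {X \<in> I. Z \<subseteq> X \<and> even (card X + card Z)} = card {X \<in> I. Z \<subseteq> X \<and> odd (card X + card Z)}"
  shows "I \<in> dot_algebra F"
proof -
  have "{X \<in> I. Z \<subseteq> X} \<in> dot_algebra F"
  proof (rule balanced_in_dot_algebra)
    show "finite {X \<in> I. Z \<subseteq> X}"
      using assms(1) by simp
    show "card {X \<in> {X \<in> I. Z \<subseteq> X}. even (card X + card Z)} = card {X \<in> {X \<in> I. Z \<subseteq> X}. odd (card X + card Z)}"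
      using assms(2) by (simp add: conj_assoc)
    show "{X, Y} \<in> dot_algebra F"
      if "X \<in> {X \<in> I. Z \<subseteq> X}" "Y \<in> {X \<in> I. Z \<subseteq> X}" "even (card X + card Z)" "odd (card Y + card Z)" for X Y
      using that by (intro opposite_parity_pair_in_dot_algebra) auto
  qed
  moreover have "{X \<in> I. \<not> Z \<subseteq> X} \<in> dot_algebra F"
  proof (rule finite_in_dot_algebra)
    show "finite {X \<in> I. \<not> Z \<subseteq> X}"
      using assms(1) by simp
  qed (simp add: singleton_in_dot_algebra)
  ultimately have "{X \<in> I. Z \<subseteq> X} \<union> {X \<in> I. \<not> Z \<subseteq> X} \<in> dot_algebra F"
    by (rule dot_algebra.disj_union) auto
  moreover have "{X \<in> I. Z \<subseteq> X} \<union> {X \<in> I. \<not> Z \<subseteq> X} = I"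
    by auto
  ultimately show ?thesis
    by simp
qed

end

lemma principal_downsets_but_one_of_downset:
  assumes "finite S" "I \<subseteq> Pow S" "\<And>X Y. X \<in> I \<Longrightarrow> Y \<subseteq> X \<Longrightarrow> Y \<in> I"
  shows "principal_downsets_but_one I Z {{Y. Y \<subseteq> S \<and> Y \<subseteq> X} | X. X \<in> I - {Z}}"
proof
  show "finite X" if "X \<in> I" for X
    using that assms(1,2) finite_subset by blast
  show "Pow X \<in> dot_algebra {{Y. Y \<subseteq> S \<and> Y \<subseteq> X} | X. X \<in> I - {Z}}" if "X \<in> I" "X \<noteq> Z" for X
  proof (rule dot_algebra.gen)
    have "Pow X = {Y. Y \<subseteq> S \<and> Y \<subseteq> X}"
      using that(1) assms(2) by auto
    then show "Pow X \<in> {{Y. Y \<subseteq> S \<and> Y \<subseteq> X} | X. X \<in> I - {Z}}"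
      using that by blast
  qed
qed (use assms(3) in blast)

lemma sum_neg_one_power_eq_card_even_minus_card_odd:
  assumes "finite A"
  shows "(\<Sum>x\<in>A. (-1::int) ^ f x) = int (card {x\<in>A. even (f x)}) - int (card {x\<in>A. odd (f x)})"
proof -
  have "(\<Sum>x\<in>A. (-1::int) ^ f x) = (\<Sum>x\<in>A. if even (f x) then 1 else -1)"
    by (intro sum.cong) auto
  also have "\<dots> = int (card {x\<in>A. even (f x)}) - int (card {x\<in>A. odd (f x)})"
    using assms by (simp add: sum.If_cases Int_def)
  finally show ?thesis .
qed

theorem theorem6p2:
  fixes S :: "'a set" and I :: "'a set set" and Z :: "'a set"
  assumes "finite S"
    and "I \<subseteq> Pow S"
    and "\<And>X Y. X \<in> I \<Longrightarrow> Y \<subseteq> X \<Longrightarrow> Y \<in> I"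
    and "Z \<in> I"
    and "gen_mobius S I Z = 0"
  shows "I \<in> dot_algebra {{Y. Y \<subseteq> S \<and> Y \<subseteq> X} | X. X \<in> I - {Z}}"
proof -
  interpret principal_downsets_but_one I Z "{{Y. Y \<subseteq> S \<and> Y \<subseteq> X} | X. X \<in> I - {Z}}"
    using assms(1-3) by (rule principal_downsets_but_one_of_downset)
  have "finite I"
    using assms(1,2) finite_subset by blast
  have "{X. X \<in> I \<and> Z \<subseteq> X \<and> X \<subseteq> S} = {X \<in> I. Z \<subseteq> X}"
    using assms(2) by auto
  then have "gen_mobius S I Z = (\<Sum>X \<in> {X \<in> I. Z \<subseteq> X}. (-1) ^ (card X + card Z))"
    using gen_mobius_eq_alternating_sum[OF assms(1), of Z I] assms(2,4) by auto
  then have "card {X \<in> I. Z \<subseteq> X \<and> even (card X + card Z)} = card {X \<in> I. Z \<subseteq> X \<and> odd (card X + card Z)}"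
    using assms(5) \<open>finite I\<close> by (simp add: sum_neg_one_power_eq_card_even_minus_card_odd conj_assoc)
  with \<open>finite I\<close> show ?thesis
    by (rule in_dot_algebra_if_parity_balanced)
qed

end
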